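(* Let $G$ be a connected groupoid with finite object set $G_0=\{e_1,\dots,e_r\}$, $A=\bigoplus_{i=1}^r A_i$ a unital ring with $A_i:=A_{e_i}\neq 0$ for all $i$, and $\alpha=(A_g,\alpha_g)_{g\in G}$ a unital global action of $G$ on $A$. If $A\subset A\star_\alpha G$ is a separable extension, then $G$ is finite.
   Context: A groupoid $G$ is a small category in which every morphism is invertible; $G_0$ is its object set (objects identified with identity morphisms), $s,t$ source and target; $gh$ is defined iff $s(g)=t(h)$; $G(e,f)$ is the set of morphisms from $e$ to $f$; $G$ is connected if $G(e,f)\neq\emptyset$ for all $e,f\in G_0$. A unital partial action of $G$ on $A$ is a family $\alpha=(A_g,\alpha_g)_{g\in G}$ where $A_{t(g)}$ is a two-sided ideal of $A$, $A_g=A1_g$ is a two-sided ideal of $A_{t(g)}$ with $1_g$ a central idempotent of $A$, $\alpha_g:A_{g^{-1}}\to A_g$ a ring isomorphism, such that $\alpha_e=\mathrm{id}_{A_e}$ for $e\in G_0$, $\alpha_h^{-1}(A_{g^{-1}}\cap A_h)\subseteq A_{(gh)^{-1}}$ and $\alpha_g(\alpha_h(x))=\alpha_{gh}(x)$ for $x\in\alpha_h^{-1}(A_{g^{-1}}\cap A_h)$, whenever $s(g)=t(h)$. It is global if $\alpha_g\alpha_h=\alpha_{gh}$ for all composable $g,h$; equivalently $A_g=A_{t(g)}$ for all $g\in G$. The (partial) skew groupoid ring $A\star_\alpha G=\bigoplus_{g\in G}A_g\delta_g$ has multiplication $(a_g\delta_g)(b_h\delta_h)=\alpha_g(\alpha_{g^{-1}}(a_g)b_h)\delta_{gh}$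 if $s(g)=t(h)$ and $0$ otherwise; it is unital with $1=\sum_{e\in G_0}1_e\delta_e$, and $A$ is regarded as a subring via $a\mapsto\sum_{e\in G_0}(a1_e)\delta_e$. A ring extension $R\subseteq S$ is separable if the multiplication map $S\otimes_R S\to S$ splits as a map of $(S,S)$-bimodules; equivalently there exists $x\in S\otimes_R S$ with $m(x)=1_S$ and $sx=xs$ for all $s\in S$. *)

theory Defs
  imports Main "HOL-Algebra.Ring"
begin

text \<open>A groupoid is given by its set of morphisms G, its set of objects G0 (identified
with identity morphisms, G0 \<subseteq> G), source s, target t, composition mul
(mul g h = gh, defined when s g = t h) and inversion ginv.\<close>

definition groupoid ::
  "'g set \<Rightarrow> 'g set \<Rightarrow> ('g \<Rightarrow> 'g) \<Rightarrow> ('g \<Rightarrow> 'g) \<Rightarrow> ('g \<Rightarrow> 'g \<Rightarrow> 'g) \<Rightarrow> ('g \<Rightarrow> 'g) \<Rightarrow> bool"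
where
  "groupoid G G0 s t mul ginv \<longleftrightarrow>
     G0 \<subseteq> G \<and>
     (\<forall>g\<in>G. s g \<in> G0 \<and> t g \<in> G0) \<and>
     (\<forall>e\<in>G0. s e = e \<and> t e = e) \<and>
     (\<forall>g\<in>G. \<forall>h\<in>G. s g = t h \<longrightarrow>
        mul g h \<in> G \<and> s (mul g h) = s h \<and> t (mul g h) = t g) \<and>
     (\<forall>g\<in>G. \<forall>h\<in>G. \<forall>k\<in>G. s g = t h \<and> s h = t k \<longrightarrow>
        mul (mul g h) k = mul g (mul h k)) \<and>
     (\<forall>g\<in>G. mul (t g) g = g \<and> mul g (s g) = g) \<and>
     (\<forall>g\<in>G. ginv g \<in> G \<and> s (ginv g) = t g \<and> t (ginv g) = s g \<and>
        mul g (ginv g) = t g \<and> mul (ginv g) g = s g)"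

definition groupoid_connected :: "'g set \<Rightarrow> 'g set \<Rightarrow> ('g \<Rightarrow> 'g) \<Rightarrow> ('g \<Rightarrow> 'g) \<Rightarrow> bool" where
  "groupoid_connected G G0 s t \<longleftrightarrow> (\<forall>e\<in>G0. \<forall>f\<in>G0. \<exists>g\<in>G. s g = e \<and> t g = f)"

text \<open>Principal (two-sided, since c is central) ideal A c generated by c.\<close>
definition ideal_of :: "'a::ring_1 \<Rightarrow> 'a set" where
  "ideal_of c = range (\<lambda>x. x * c)"

definition central_idempotent :: "'a::ring_1 \<Rightarrow> bool" where
  "central_idempotent c \<longleftrightarrow> c * c = c \<and> (\<forall>x. x * c = c * x)"

text \<open>Unital partial action (A_g, alpha_g) of G on the ring A (= UNIV of type 'a):
  A_g = A * one_g g with one_g g a central idempotent, A_g \<subseteq> A_{t g},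
  alpha g : A_{g^{-1}} \<rightarrow> A_g a ring isomorphism, alpha_e = id, and the
  partial composition rule.\<close>
definition unital_partial_action ::
  "'g set \<Rightarrow> 'g set \<Rightarrow> ('g \<Rightarrow> 'g) \<Rightarrow> ('g \<Rightarrow> 'g) \<Rightarrow> ('g \<Rightarrow> 'g \<Rightarrow> 'g) \<Rightarrow> ('g \<Rightarrow> 'g)
    \<Rightarrow> ('g \<Rightarrow> 'a::ring_1) \<Rightarrow> ('g \<Rightarrow> 'a \<Rightarrow> 'a) \<Rightarrow> bool"
where
  "unital_partial_action G G0 s t mul ginv one_g alpha \<longleftrightarrow>
     (\<forall>g\<in>G. central_idempotent (one_g g)) \<and>
     (\<forall>g\<in>G. ideal_of (one_g g) \<subseteq> ideal_of (one_g (t g))) \<and>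
     (\<forall>g\<in>G. bij_betw (alpha g) (ideal_of (one_g (ginv g))) (ideal_of (one_g g)) \<and>
        (\<forall>x\<in>ideal_of (one_g (ginv g)). \<forall>y\<in>ideal_of (one_g (ginv g)).
           alpha g (x + y) = alpha g x + alpha g y \<and> alpha g (x * y) = alpha g x * alpha g y)) \<and>
     (\<forall>e\<in>G0. \<forall>x\<in>ideal_of (one_g e). alpha e x = x) \<and>
     (\<forall>g\<in>G. \<forall>h\<in>G. s g = t h \<longrightarrow>
        (\<forall>x\<in>ideal_of (one_g (ginv h)). alpha h x \<in> ideal_of (one_g (ginv g)) \<longrightarrow>
           x \<in> ideal_of (one_g (ginv (mul g h))) \<and> alpha g (alpha h x) = alpha (mul g h) x))"

definition global_action ::
  "'g set \<Rightarrow> 'g set \<Rightarrow> ('g \<Rightarrow> 'g) \<Rightarrow> ('g \<Rightarrow> 'g) \<Rightarrow> ('g \<Rightarrow> 'g \<Rightarrow> 'g) \<Rightarrow> ('g \<Rightarrow> 'g)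
    \<Rightarrow> ('g \<Rightarrow> 'a::ring_1) \<Rightarrow> ('g \<Rightarrow> 'a \<Rightarrow> 'a) \<Rightarrow> bool"
where
  "global_action G G0 s t mul ginv one_g alpha \<longleftrightarrow>
     unital_partial_action G G0 s t mul ginv one_g alpha \<and>
     (\<forall>g\<in>G. ideal_of (one_g g) = ideal_of (one_g (t g)))"

text \<open>Elements \<Sum> a_g \<delta>_g are represented as finitely supported functions f : G \<rightarrow> A
  with f g \<in> A_g (and f g = 0 outside G).\<close>
definition skew_groupoid_ring ::
  "'g set \<Rightarrow> 'g set \<Rightarrow> ('g \<Rightarrow> 'g) \<Rightarrow> ('g \<Rightarrow> 'g) \<Rightarrow> ('g \<Rightarrow> 'g \<Rightarrow> 'g) \<Rightarrow> ('g \<Rightarrow> 'g)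
    \<Rightarrow> ('g \<Rightarrow> 'a::ring_1) \<Rightarrow> ('g \<Rightarrow> 'a \<Rightarrow> 'a) \<Rightarrow> ('g \<Rightarrow> 'a) ring"
where
  "skew_groupoid_ring G G0 s t mul ginv one_g alpha =
    \<lparr> carrier = {f. (\<forall>g. g \<notin> G \<longrightarrow> f g = 0) \<and> (\<forall>g\<in>G. f g \<in> ideal_of (one_g g))
                    \<and> finite {g. f g \<noteq> 0}},
      monoid.mult = (\<lambda>f h. \<lambda>k. if k \<in> G then
                        (\<Sum>g\<in>{g\<in>G. f g \<noteq> 0 \<and> t g = t k}.
                            alpha g (alpha (ginv g) (f g) * h (mul (ginv g) k)))
                      else 0),
      one = (\<lambda>k. if k \<in> G0 then one_g k else 0),
      zero = (\<lambda>k. 0),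
      add = (\<lambda>f h. \<lambda>k. f k + h k) \<rparr>"

definition skew_embed :: "'g set \<Rightarrow> ('g \<Rightarrow> 'a::ring_1) \<Rightarrow> 'a \<Rightarrow> ('g \<Rightarrow> 'a)" where
  "skew_embed G0 one_g a = (\<lambda>k. if k \<in> G0 then a * one_g k else 0)"

text \<open>Tensor product S \<otimes>_R S realised as the free abelian group on S \<times> S
  (finitely supported integer-valued functions) modulo the subgroup generated by
  the bilinearity and R-balancedness relations.\<close>

definition fdelta :: "'c \<times> 'c \<Rightarrow> ('c \<times> 'c \<Rightarrow> int)" where
  "fdelta p = (\<lambda>q. if q = p then 1 else 0)"

definition fsupp :: "('c \<times> 'c \<Rightarrow> int) \<Rightarrow> ('c \<times> 'c) set" where
  "fsupp x = {p. x p \<noteq> 0}"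

definition formal_sums :: "('c, 'm) ring_scheme \<Rightarrow> ('c \<times> 'c \<Rightarrow> int) set" where
  "formal_sums S = {x. finite (fsupp x) \<and> fsupp x \<subseteq> carrier S \<times> carrier S}"

inductive_set tensor_rel :: "('c, 'm) ring_scheme \<Rightarrow> 'c set \<Rightarrow> ('c \<times> 'c \<Rightarrow> int) set"
  for S :: "('c, 'm) ring_scheme" and R :: "'c set"
where
  zero: "(\<lambda>_. 0) \<in> tensor_rel S R"
| add_left: "\<lbrakk>a \<in> carrier S; a' \<in> carrier S; b \<in> carrier S\<rbrakk> \<Longrightarrow>
     fdelta (a \<oplus>\<^bsub>S\<^esub> a', b) - fdelta (a, b) - fdelta (a', b) \<in> tensor_rel S R"
| add_right: "\<lbrakk>a \<in> carrier S; b \<in> carrier S; b' \<in> carrier S\<rbrakk> \<Longrightarrow>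
     fdelta (a, b \<oplus>\<^bsub>S\<^esub> b') - fdelta (a, b) - fdelta (a, b') \<in> tensor_rel S R"
| balanced: "\<lbrakk>a \<in> carrier S; r \<in> R; b \<in> carrier S\<rbrakk> \<Longrightarrow>
     fdelta (a \<otimes>\<^bsub>S\<^esub> r, b) - fdelta (a, r \<otimes>\<^bsub>S\<^esub> b) \<in> tensor_rel S R"
| diff: "\<lbrakk>x \<in> tensor_rel S R; y \<in> tensor_rel S R\<rbrakk> \<Longrightarrow> x - y \<in> tensor_rel S R"

definition tensor_lmul :: "('c, 'm) ring_scheme \<Rightarrow> 'c \<Rightarrow> ('c \<times> 'c \<Rightarrow> int) \<Rightarrow> ('c \<times> 'c \<Rightarrow> int)" where
  "tensor_lmul S c x = (\<lambda>q. \<Sum>p\<in>fsupp x. if q = (c \<otimes>\<^bsub>S\<^esub> fst p, snd p) then x p else 0)"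

definition tensor_rmul :: "('c, 'm) ring_scheme \<Rightarrow> ('c \<times> 'c \<Rightarrow> int) \<Rightarrow> 'c \<Rightarrow> ('c \<times> 'c \<Rightarrow> int)" where
  "tensor_rmul S x c = (\<lambda>q. \<Sum>p\<in>fsupp x. if q = (fst p, snd p \<otimes>\<^bsub>S\<^esub> c) then x p else 0)"

definition tensor_mult_map :: "('c, 'm) ring_scheme \<Rightarrow> ('c \<times> 'c \<Rightarrow> int) \<Rightarrow> 'c" where
  "tensor_mult_map S x = (\<Oplus>\<^bsub>S\<^esub> p\<in>fsupp x. add_pow S (x p) (fst p \<otimes>\<^bsub>S\<^esub> snd p))"

definition separable_extension :: "('c, 'm) ring_scheme \<Rightarrow> 'c set \<Rightarrow> bool" where
  "separable_extension S R \<longleftrightarrow>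
     (\<exists>x\<in>formal_sums S. tensor_mult_map S x = \<one>\<^bsub>S\<^esub> \<and>
        (\<forall>c\<in>carrier S. tensor_lmul S c x - tensor_rmul S x c \<in> tensor_rel S R))"

end

theory Submission
  imports Defs
begin

text \<open>Let \<open>x = \<Sum> n\<^sub>p a\<^sub>p \<otimes> b\<^sub>p\<close> be a separability element. For a morphism \<open>\<gamma>\<close>, the map
  \<open>(a, b) \<mapsto> a(\<gamma>) \<alpha>\<^sub>\<gamma>(b(s \<gamma>))\<close> is biadditive and \<open>A\<close>-balanced, so it can be evaluated on
  \<open>1\<^sub>\<gamma>\<delta>\<^sub>\<gamma> x = x 1\<^sub>\<gamma>\<delta>\<^sub>\<gamma>\<close>; this yields \<open>M(\<gamma>) = \<alpha>\<^sub>\<gamma>(N(s \<gamma>))\<close>, where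
  \<open>M(\<gamma>) = \<Sum> n\<^sub>p a\<^sub>p(\<gamma>) \<alpha>\<^sub>\<gamma>(b\<^sub>p(\<gamma>\<^sup>-\<^sup>1))\<close> and \<open>N(e) = \<Sum> n\<^sub>p a\<^sub>p(e) b\<^sub>p(e)\<close>.
  Since \<open>m(x) = 1\<close>, the component of \<open>1\<close> at an object \<open>e\<^sub>0\<close> is \<open>\<Sum>\<^bsub>t \<gamma> = e\<^sub>0\<^esub> M(\<gamma>) = 1\<^bsub>e\<^sub>0\<^esub> \<noteq> 0\<close>,
  so \<open>N(e) \<noteq> 0\<close> for some object \<open>e\<close>. As each \<open>\<alpha>\<^sub>\<gamma>\<close> is injective, \<open>M(\<gamma>) \<noteq> 0\<close> for every
  \<open>\<gamma>\<close> with source \<open>e\<close>, and \<open>M\<close> is supported on the finitely many morphisms where some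
  \<open>a\<^sub>p\<close> is nonzero. Hence the morphisms with source \<open>e\<close> are finitely many, and by
  connectedness so are those with any other source.\<close>

lemma central_idempotent_idem: "central_idempotent c \<Longrightarrow> c * c = c"
  and central_idempotent_commute: "central_idempotent c \<Longrightarrow> x * c = c * x"
  unfolding central_idempotent_def by blast+

lemma ideal_of_iff:
  assumes "central_idempotent c"
  shows "x \<in> ideal_of c \<longleftrightarrow> x * c = x"
proof
  assume "x \<in> ideal_of c"
  then obtain z where z: "x = z * c" by (auto simp: ideal_of_def)
  have "x * c = z * (c * c)" unfolding z by (rule mult.assoc)
  also have "\<dots> = x" using z central_idempotent_idem[OF assms] by simp
  finally show "x * c = x" .
next
  assume "x * c = x"
  then show "x \<in> ideal_of c" unfolding ideal_of_def by (metis rangeI)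
qed

lemma ideal_of_idem_mult:
  assumes "central_idempotent c" "x \<in> ideal_of c"
  shows "c * x = x"
  using assms ideal_of_iff central_idempotent_commute by metis

lemma ideal_of_zero: "central_idempotent c \<Longrightarrow> 0 \<in> ideal_of c"
  by (simp add: ideal_of_iff)

lemma ideal_of_add:
  "central_idempotent c \<Longrightarrow> x \<in> ideal_of c \<Longrightarrow> y \<in> ideal_of c \<Longrightarrow> x + y \<in> ideal_of c"
  by (simp add: ideal_of_iff distrib_right)

lemma ideal_of_uminus: "central_idempotent c \<Longrightarrow> x \<in> ideal_of c \<Longrightarrow> - x \<in> ideal_of c"
  by (simp add: ideal_of_iff)

lemma ideal_of_mult_left: "central_idempotent c \<Longrightarrow> x \<in> ideal_of c \<Longrightarrow> z * x \<in> ideal_of c"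
  by (simp add: ideal_of_iff mult.assoc)

lemma ideal_of_mult_right:
  assumes "central_idempotent c" "x \<in> ideal_of c"
  shows "x * z \<in> ideal_of c"
proof -
  have "x * z * c = x * c * z"
    using central_idempotent_commute[OF assms(1), of z] by (simp add: mult.assoc)
  also have "\<dots> = x * z" using assms by (simp add: ideal_of_iff)
  finally show ?thesis using assms(1) by (simp add: ideal_of_iff)
qed

lemma ideal_of_generator_mult: "z * c \<in> ideal_of c"
  by (simp add: ideal_of_def)

lemma ideal_of_self: "central_idempotent c \<Longrightarrow> c \<in> ideal_of c"
  by (simp add: ideal_of_iff central_idempotent_idem)

lemma ideal_of_sum:
  "central_idempotent c \<Longrightarrow> (\<And>i. i \<in> I \<Longrightarrow> f i \<in> ideal_of c) \<Longrightarrow> sum f I \<in> ideal_of c"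
  by (induction I rule: infinite_finite_induct) (auto simp: ideal_of_zero ideal_of_add)

lemma central_idempotent_eq_if_ideal_of_eq:
  assumes "central_idempotent c" "central_idempotent d" "ideal_of c = ideal_of d"
  shows "c = d"
proof -
  have "c * d = c" using assms ideal_of_self[OF assms(1)] ideal_of_iff[OF assms(2)] by simp
  moreover have "d * c = d" using assms ideal_of_self[OF assms(2)] ideal_of_iff[OF assms(1)] by simp
  moreover have "c * d = d * c" using central_idempotent_commute[OF assms(1)] by simp
  ultimately show ?thesis by simp
qed

lemma sum_eq_single:
  assumes "finite X" "\<And>x. x \<in> X \<Longrightarrow> x \<noteq> a \<Longrightarrow> f x = 0"
  shows "sum f X = (if a \<in> X then f a else 0)"
proof (cases "a \<in> X")
  case True
  then have "sum f X = f a + sum f (X - {a})" by (rule sum.remove[OF assms(1)])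
  moreover have "sum f (X - {a}) = 0" by (rule sum.neutral) (use assms(2) in blast)
  ultimately show ?thesis using True by simp
qed (use assms(2) in \<open>auto intro: sum.neutral\<close>)


definition tensor_eval :: "('c \<times> 'c \<Rightarrow> 'a::ring_1) \<Rightarrow> ('c \<times> 'c \<Rightarrow> int) \<Rightarrow> 'a" where
  "tensor_eval F x = (\<Sum>p\<in>fsupp x. of_int (x p) * F p)"

lemma tensor_eval_superset:
  assumes "finite X" "fsupp x \<subseteq> X"
  shows "tensor_eval F x = (\<Sum>p\<in>X. of_int (x p) * F p)"
  unfolding tensor_eval_def
  by (rule sum.mono_neutral_left) (use assms in \<open>auto simp: fsupp_def\<close>)

lemma fsupp_diff_subset: "fsupp (x - y) \<subseteq> fsupp x \<union> fsupp y"
  by (auto simp: fsupp_def)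

lemma finite_fsupp_diff: "finite (fsupp x) \<Longrightarrow> finite (fsupp y) \<Longrightarrow> finite (fsupp (x - y))"
  using finite_subset[OF fsupp_diff_subset] by blast

lemma fsupp_fdelta: "fsupp (fdelta p) = {p}"
  by (auto simp: fsupp_def fdelta_def)

lemma tensor_eval_diff:
  assumes "finite (fsupp x)" "finite (fsupp y)"
  shows "tensor_eval F (x - y) = tensor_eval F x - tensor_eval F y"
proof -
  let ?X = "fsupp x \<union> fsupp y"
  have "tensor_eval F (x - y) = (\<Sum>p\<in>?X. of_int ((x - y) p) * F p)"
    by (rule tensor_eval_superset) (use assms fsupp_diff_subset in auto)
  also have "\<dots> = (\<Sum>p\<in>?X. of_int (x p) * F p) - (\<Sum>p\<in>?X. of_int (y p) * F p)"
    by (simp add: sum_subtractf algebra_simps)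
  also have "\<dots> = tensor_eval F x - tensor_eval F y"
    using tensor_eval_superset[of ?X x F] tensor_eval_superset[of ?X y F] assms by auto
  finally show ?thesis .
qed

lemma tensor_eval_fdelta: "tensor_eval F (fdelta p) = F p"
  unfolding tensor_eval_def fsupp_fdelta by (simp add: fdelta_def)

lemma finite_fsupp_tensor_rel: "x \<in> tensor_rel S R \<Longrightarrow> finite (fsupp x)"
proof (induction rule: tensor_rel.induct)
  case zero
  then show ?case by (simp add: fsupp_def)
next
  case (diff x y)
  then show ?case using finite_fsupp_diff by blast
qed (simp_all only: finite_fsupp_diff fsupp_fdelta finite.intros)

lemma tensor_eval_tensor_rel:
  fixes S :: "('c, 'm) ring_scheme" and F :: "'c \<times> 'c \<Rightarrow> 'a::ring_1"
  assumes F_add_left: "\<And>a a' b. a \<in> carrier S \<Longrightarrow> a' \<in> carrier S \<Longrightarrow> b \<in> carrier S \<Longrightarrow>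
              F (a \<oplus>\<^bsub>S\<^esub> a', b) = F (a, b) + F (a', b)"
    and F_add_right: "\<And>a b b'. a \<in> carrier S \<Longrightarrow> b \<in> carrier S \<Longrightarrow> b' \<in> carrier S \<Longrightarrow>
              F (a, b \<oplus>\<^bsub>S\<^esub> b') = F (a, b) + F (a, b')"
    and F_balanced: "\<And>a r b. a \<in> carrier S \<Longrightarrow> r \<in> R \<Longrightarrow> b \<in> carrier S \<Longrightarrow>
              F (a \<otimes>\<^bsub>S\<^esub> r, b) = F (a, r \<otimes>\<^bsub>S\<^esub> b)"
    and x: "x \<in> tensor_rel S R"
  shows "tensor_eval F x = 0"
  using x
proof induction
  case zero
  then show ?case by (simp add: tensor_eval_def fsupp_def)
next
  case (add_left a a' b)
  then show ?case
    by (simp only: tensor_eval_diff finite_fsupp_diff fsupp_fdelta finite.intros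
        tensor_eval_fdelta F_add_left) simp
next
  case (add_right a b b')
  then show ?case
    by (simp only: tensor_eval_diff finite_fsupp_diff fsupp_fdelta finite.intros
        tensor_eval_fdelta F_add_right) simp
next
  case (balanced a r b)
  then show ?case
    by (simp only: tensor_eval_diff fsupp_fdelta finite.intros tensor_eval_fdelta F_balanced) simp
next
  case (diff x y)
  show ?case
    by (simp only: tensor_eval_diff[OF diff.hyps[THEN finite_fsupp_tensor_rel]] diff.IH diff_zero)
qed

text \<open>\<open>tensor_lmul\<close> and \<open>tensor_rmul\<close> are pushforwards of formal sums along maps \<open>\<phi>\<close>
  of this form.\<close>

lemma tensor_eval_image:
  fixes F :: "'c \<times> 'c \<Rightarrow> 'a::ring_1" and \<phi> :: "'c \<times> 'c \<Rightarrow> 'c \<times> 'c"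
  assumes fin: "finite (fsupp x)"
  defines "y \<equiv> (\<lambda>q. \<Sum>p\<in>fsupp x. if q = \<phi> p then x p else 0)"
  shows "finite (fsupp y)" and "tensor_eval F y = (\<Sum>p\<in>fsupp x. of_int (x p) * F (\<phi> p))"
proof -
  let ?P = "fsupp x"
  have sub: "fsupp y \<subseteq> \<phi> ` ?P"
  proof
    fix q assume "q \<in> fsupp y"
    then have "(\<Sum>p\<in>?P. if q = \<phi> p then x p else 0) \<noteq> 0" by (simp add: fsupp_def y_def)
    then obtain p where "p \<in> ?P" "(if q = \<phi> p then x p else 0) \<noteq> 0"
      by (rule sum.not_neutral_contains_not_neutral)
    then show "q \<in> \<phi> ` ?P" by (auto split: if_splits)
  qed
  then show "finite (fsupp y)" using fin finite_subset by blast
  have "tensor_eval F y = (\<Sum>q\<in>\<phi> ` ?P. of_int (y q) * F q)"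
    by (rule tensor_eval_superset) (use fin sub in auto)
  also have "\<dots> = (\<Sum>q\<in>\<phi> ` ?P. \<Sum>p\<in>?P. if q = \<phi> p then of_int (x p) * F q else 0)"
    unfolding y_def of_int_sum sum_distrib_right by (intro sum.cong refl) simp
  also have "\<dots> = (\<Sum>p\<in>?P. \<Sum>q\<in>\<phi> ` ?P. if q = \<phi> p then of_int (x p) * F q else 0)"
    by (rule sum.swap)
  also have "\<dots> = (\<Sum>p\<in>?P. of_int (x p) * F (\<phi> p))"
    using fin by (intro sum.cong refl) simp
  finally show "tensor_eval F y = (\<Sum>p\<in>fsupp x. of_int (x p) * F (\<phi> p))" .
qed


locale groupoid_laws =
  fixes G G0 :: "'g set"
    and s t :: "'g \<Rightarrow> 'g"
    and mul :: "'g \<Rightarrow> 'g \<Rightarrow> 'g"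
    and ginv :: "'g \<Rightarrow> 'g"
  assumes groupoid: "groupoid G G0 s t mul ginv"
begin

lemma obj_closed: "e \<in> G0 \<Longrightarrow> e \<in> G"
  using groupoid unfolding groupoid_def by blast

lemma src_obj: "g \<in> G \<Longrightarrow> s g \<in> G0"
  and tgt_obj: "g \<in> G \<Longrightarrow> t g \<in> G0"
  using groupoid unfolding groupoid_def by blast+

lemma src_closed: "g \<in> G \<Longrightarrow> s g \<in> G"
  and tgt_closed: "g \<in> G \<Longrightarrow> t g \<in> G"
  using src_obj tgt_obj obj_closed by blast+

lemma src_of_obj: "e \<in> G0 \<Longrightarrow> s e = e"
  and tgt_of_obj: "e \<in> G0 \<Longrightarrow> t e = e"
  using groupoid unfolding groupoid_def by blast+

lemma mul_closed: "g \<in> G \<Longrightarrow> h \<in> G \<Longrightarrow> s g = t h \<Longrightarrow> mul g h \<in> G"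
  and src_mul: "g \<in> G \<Longrightarrow> h \<in> G \<Longrightarrow> s g = t h \<Longrightarrow> s (mul g h) = s h"
  and tgt_mul: "g \<in> G \<Longrightarrow> h \<in> G \<Longrightarrow> s g = t h \<Longrightarrow> t (mul g h) = t g"
  using groupoid unfolding groupoid_def by blast+

lemma mul_assoc:
  "g \<in> G \<Longrightarrow> h \<in> G \<Longrightarrow> k \<in> G \<Longrightarrow> s g = t h \<Longrightarrow> s h = t k \<Longrightarrow>
    mul (mul g h) k = mul g (mul h k)"
  using groupoid unfolding groupoid_def by blast

lemma mul_tgt_left: "g \<in> G \<Longrightarrow> mul (t g) g = g"
  and mul_src_right: "g \<in> G \<Longrightarrow> mul g (s g) = g"
  using groupoid unfolding groupoid_def by blast+

lemma ginv_closed: "g \<in> G \<Longrightarrow> ginv g \<in> G"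
  and src_ginv: "g \<in> G \<Longrightarrow> s (ginv g) = t g"
  and tgt_ginv: "g \<in> G \<Longrightarrow> t (ginv g) = s g"
  and mul_ginv_right: "g \<in> G \<Longrightarrow> mul g (ginv g) = t g"
  and mul_ginv_left: "g \<in> G \<Longrightarrow> mul (ginv g) g = s g"
  using groupoid unfolding groupoid_def by blast+

lemma ginv_ginv:
  assumes g: "g \<in> G"
  shows "ginv (ginv g) = g"
proof -
  let ?h = "ginv g" let ?h' = "ginv ?h"
  have h: "?h \<in> G" "?h' \<in> G" using g ginv_closed by auto
  have "?h' = mul ?h' (s ?h')" using mul_src_right h by auto
  also have "s ?h' = mul ?h g" using src_ginv[OF h(1)] tgt_ginv[OF g] mul_ginv_left[OF g] by simp
  also have "mul ?h' (mul ?h g) = mul (mul ?h' ?h) g"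
    using mul_assoc[of ?h' ?h g] g h src_ginv tgt_ginv by auto
  also have "mul ?h' ?h = t g" using mul_ginv_left[OF h(1)] src_ginv[OF g] by simp
  also have "mul (t g) g = g" using mul_tgt_left g by auto
  finally show ?thesis .
qed

lemma ginv_obj:
  assumes "e \<in> G0"
  shows "ginv e = e"
proof -
  have e: "e \<in> G" using assms obj_closed by auto
  have "mul e (ginv e) = ginv e"
    using mul_tgt_left[OF ginv_closed[OF e]] tgt_ginv[OF e] src_of_obj[OF assms] by simp
  moreover have "mul e (ginv e) = e" using mul_ginv_right[OF e] tgt_of_obj[OF assms] by simp
  ultimately show ?thesis by simp
qed

lemma mul_obj_obj: "e \<in> G0 \<Longrightarrow> mul e e = e"
  using mul_tgt_left[OF obj_closed] tgt_of_obj by metis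

lemma ginv_mul_tgt: "g \<in> G \<Longrightarrow> mul (ginv g) (t g) = ginv g"
  using mul_src_right[OF ginv_closed] src_ginv by metis

lemma mul_ginv_mul_cancel:
  assumes "g \<in> G" "k \<in> G" "t g = t k"
  shows "mul g (mul (ginv g) k) = k"
proof -
  have "mul g (mul (ginv g) k) = mul (mul g (ginv g)) k"
    using mul_assoc[of g "ginv g" k] assms ginv_closed tgt_ginv src_ginv by simp
  also have "\<dots> = k" using assms mul_ginv_right mul_tgt_left by simp
  finally show ?thesis .
qed

lemma eq_if_ginv_mul_obj:
  assumes "g \<in> G" "k \<in> G" "t g = t k" and obj: "mul (ginv g) k \<in> G0"
  shows "g = k"
proof -
  have "t (mul (ginv g) k) = s g"
    using tgt_mul[of "ginv g" k] assms ginv_closed src_ginv tgt_ginv by simp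
  then have "mul (ginv g) k = s g" using tgt_of_obj[OF obj] by simp
  then show ?thesis using mul_ginv_mul_cancel[OF assms(1-3)] mul_src_right[OF assms(1)] by simp
qed

text \<open>Right multiplication by a morphism from \<open>e'\<close> to \<open>e\<close> maps the morphisms with source \<open>e\<close>
  onto those with source \<open>e'\<close>.\<close>

lemma finite_if_finite_src_fiber:
  assumes conn: "groupoid_connected G G0 s t" and fin: "finite G0"
    and e: "e \<in> G0" and fiber: "finite {\<gamma>\<in>G. s \<gamma> = e}"
  shows "finite G"
proof -
  have fibers: "finite {\<gamma>\<in>G. s \<gamma> = e'}" if e': "e' \<in> G0" for e'
  proof -
    obtain h where h: "h \<in> G" "s h = e" "t h = e'"
      using conn e e' unfolding groupoid_connected_def by blast
    have "{\<gamma>\<in>G. s \<gamma> = e'} \<subseteq> (\<lambda>k. mul k (ginv h)) ` {\<gamma>\<in>G. s \<gamma> = e}"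
    proof
      fix \<gamma> assume "\<gamma> \<in> {\<gamma>\<in>G. s \<gamma> = e'}"
      then have \<gamma>: "\<gamma> \<in> G" and composable: "s \<gamma> = t h" using h by auto
      have "mul (mul \<gamma> h) (ginv h) = mul \<gamma> (mul h (ginv h))"
        using mul_assoc[of \<gamma> h "ginv h"] \<gamma> h composable ginv_closed tgt_ginv by simp
      also have "\<dots> = \<gamma>" using mul_ginv_right[OF h(1)] mul_src_right[OF \<gamma>] composable by metis
      finally show "\<gamma> \<in> (\<lambda>k. mul k (ginv h)) ` {\<gamma>\<in>G. s \<gamma> = e}"
        using mul_closed src_mul \<gamma> h composable by (metis (mono_tags, lifting) image_eqI mem_Collect_eq)
    qed
    then show ?thesis using finite_subset fiber by blast
  qed
  have "G = (\<Union>e'\<in>G0. {\<gamma>\<in>G. s \<gamma> = e'})" using src_obj by blast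
  moreover have "finite (\<Union>e'\<in>G0. {\<gamma>\<in>G. s \<gamma> = e'})" by (rule finite_UN_I[OF fin fibers])
  ultimately show ?thesis by simp
qed

end


locale global_groupoid_action = groupoid_laws G G0 s t mul ginv
  for G G0 :: "'g set"
    and s t :: "'g \<Rightarrow> 'g"
    and mul :: "'g \<Rightarrow> 'g \<Rightarrow> 'g"
    and ginv :: "'g \<Rightarrow> 'g"
    and one_g :: "'g \<Rightarrow> 'a::ring_1"
    and alpha :: "'g \<Rightarrow> 'a \<Rightarrow> 'a" +
  assumes global: "global_action G G0 s t mul ginv one_g alpha"
    and one_g_obj_nonzero: "\<forall>e\<in>G0. one_g e \<noteq> 0"
begin

abbreviation A :: "'g \<Rightarrow> 'a set" where "A g \<equiv> ideal_of (one_g g)"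

lemma one_g_central_idempotent: "g \<in> G \<Longrightarrow> central_idempotent (one_g g)"
  and alpha_bij: "g \<in> G \<Longrightarrow> bij_betw (alpha g) (A (ginv g)) (A g)"
  and alpha_add: "g \<in> G \<Longrightarrow> x \<in> A (ginv g) \<Longrightarrow> y \<in> A (ginv g) \<Longrightarrow>
      alpha g (x + y) = alpha g x + alpha g y"
  and alpha_mult: "g \<in> G \<Longrightarrow> x \<in> A (ginv g) \<Longrightarrow> y \<in> A (ginv g) \<Longrightarrow>
      alpha g (x * y) = alpha g x * alpha g y"
  and alpha_obj: "e \<in> G0 \<Longrightarrow> x \<in> A e \<Longrightarrow> alpha e x = x"
  and alpha_alpha: "g \<in> G \<Longrightarrow> h \<in> G \<Longrightarrow> s g = t h \<Longrightarrow> x \<in> A (ginv h) \<Longrightarrow>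
      alpha h x \<in> A (ginv g) \<Longrightarrow> alpha g (alpha h x) = alpha (mul g h) x"
  and ideal_of_one_g_tgt: "g \<in> G \<Longrightarrow> A g = A (t g)"
  using global unfolding global_action_def unital_partial_action_def by blast+

lemma one_g_tgt: "g \<in> G \<Longrightarrow> one_g g = one_g (t g)"
  using central_idempotent_eq_if_ideal_of_eq one_g_central_idempotent
    ideal_of_one_g_tgt tgt_closed by blast

lemma one_g_nonzero: "g \<in> G \<Longrightarrow> one_g g \<noteq> 0"
  using one_g_tgt one_g_obj_nonzero tgt_obj by simp

lemma ideal_of_one_g_ginv: "g \<in> G \<Longrightarrow> A (ginv g) = A (s g)"
  using one_g_tgt[OF ginv_closed] tgt_ginv by metis

lemma alpha_closed: "g \<in> G \<Longrightarrow> x \<in> A (ginv g) \<Longrightarrow> alpha g x \<in> A g"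
  using alpha_bij bij_betw_apply by metis

lemma alpha_inj:
  "g \<in> G \<Longrightarrow> x \<in> A (ginv g) \<Longrightarrow> y \<in> A (ginv g) \<Longrightarrow> alpha g x = alpha g y \<Longrightarrow> x = y"
  using alpha_bij bij_betw_imp_inj_on inj_onD by metis

lemma alpha_zero:
  assumes "g \<in> G"
  shows "alpha g 0 = 0"
proof -
  have "0 \<in> A (ginv g)" using ideal_of_zero one_g_central_idempotent ginv_closed assms by blast
  then have "alpha g (0 + 0) = alpha g 0 + alpha g 0" using alpha_add[OF assms] by blast
  then show ?thesis by simp
qed

lemma alpha_alpha_ginv:
  assumes g: "g \<in> G" and y: "y \<in> A g"
  shows "alpha g (alpha (ginv g) y) = y"
proof -
  have y': "y \<in> A (ginv (ginv g))" using y ginv_ginv g by simp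
  have "alpha g (alpha (ginv g) y) = alpha (mul g (ginv g)) y"
    using alpha_alpha[OF g ginv_closed[OF g] _ y'] alpha_closed[OF ginv_closed[OF g] y'] tgt_ginv g
    by simp
  also have "\<dots> = y" using mul_ginv_right g alpha_obj tgt_obj y ideal_of_one_g_tgt by simp
  finally show ?thesis .
qed

lemma alpha_uminus:
  assumes "g \<in> G" "x \<in> A (ginv g)"
  shows "alpha g (- x) = - alpha g x"
proof -
  have "- x \<in> A (ginv g)" using ideal_of_uminus one_g_central_idempotent ginv_closed assms by blast
  then have "alpha g (x + - x) = alpha g x + alpha g (- x)" using alpha_add assms by blast
  then show ?thesis using alpha_zero assms by (simp add: eq_neg_iff_add_eq_0 add.commute)
qed

lemma alpha_of_nat_mult:
  assumes "g \<in> G" "x \<in> A (ginv g)"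
  shows "alpha g (of_nat n * x) = of_nat n * alpha g x"
proof (induction n)
  case 0
  then show ?case using alpha_zero assms by simp
next
  case (Suc n)
  have "of_nat n * x \<in> A (ginv g)"
    using ideal_of_mult_left one_g_central_idempotent ginv_closed assms by blast
  then show ?case using alpha_add assms Suc by (simp add: distrib_right)
qed

lemma alpha_of_int_mult:
  assumes "g \<in> G" "x \<in> A (ginv g)"
  shows "alpha g (of_int n * x) = of_int n * alpha g x"
proof (cases "n \<ge> 0")
  case True
  then have "of_int n = (of_nat (nat n) :: 'a)" by simp
  then show ?thesis using alpha_of_nat_mult assms by simp
next
  case False
  then have "of_int n = - (of_nat (nat (- n)) :: 'a)" by simp
  moreover have "of_nat (nat (- n)) * x \<in> A (ginv g)"
    using ideal_of_mult_left one_g_central_idempotent ginv_closed assms by blast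
  ultimately show ?thesis using alpha_of_nat_mult alpha_uminus assms by simp
qed

lemma alpha_sum:
  assumes "g \<in> G" "\<And>i. i \<in> I \<Longrightarrow> f i \<in> A (ginv g)"
  shows "alpha g (sum f I) = (\<Sum>i\<in>I. alpha g (f i))"
  using assms(2)
proof (induction I rule: infinite_finite_induct)
  case (insert i I)
  have "sum f I \<in> A (ginv g)"
    using ideal_of_sum one_g_central_idempotent ginv_closed assms(1) insert by blast
  then show ?case using insert alpha_add assms(1) by simp
qed (simp_all add: alpha_zero assms)


abbreviation S :: "('g \<Rightarrow> 'a) ring" where
  "S \<equiv> skew_groupoid_ring G G0 s t mul ginv one_g alpha"

abbreviation emb :: "'a \<Rightarrow> 'g \<Rightarrow> 'a" where
  "emb \<equiv> skew_embed G0 one_g"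

definition unit_delta :: "'g \<Rightarrow> 'g \<Rightarrow> 'a" where
  "unit_delta \<gamma> = (\<lambda>k. if k = \<gamma> then one_g \<gamma> else 0)"

lemma carrier_S_iff:
  "f \<in> carrier S \<longleftrightarrow> (\<forall>g. g \<notin> G \<longrightarrow> f g = 0) \<and> (\<forall>g\<in>G. f g \<in> A g) \<and> finite {g. f g \<noteq> 0}"
  by (simp add: skew_groupoid_ring_def)

lemma mult_S_apply:
  "(f \<otimes>\<^bsub>S\<^esub> h) k = (if k \<in> G then
      (\<Sum>g\<in>{g\<in>G. f g \<noteq> 0 \<and> t g = t k}. alpha g (alpha (ginv g) (f g) * h (mul (ginv g) k)))
    else 0)"
  and add_S: "f \<oplus>\<^bsub>S\<^esub> h = (\<lambda>k. f k + h k)"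
  and zero_S: "\<zero>\<^bsub>S\<^esub> = (\<lambda>k. 0)"
  and one_S: "\<one>\<^bsub>S\<^esub> = (\<lambda>k. if k \<in> G0 then one_g k else 0)"
  by (simp_all add: skew_groupoid_ring_def)

lemma carrier_S_outside: "f \<in> carrier S \<Longrightarrow> g \<notin> G \<Longrightarrow> f g = 0"
  and carrier_S_in_ideal: "f \<in> carrier S \<Longrightarrow> g \<in> G \<Longrightarrow> f g \<in> A g"
  and carrier_S_finite: "f \<in> carrier S \<Longrightarrow> finite {g. f g \<noteq> 0}"
  using carrier_S_iff by blast+

lemma carrier_S_finite_restrict: "f \<in> carrier S \<Longrightarrow> finite {g\<in>G. f g \<noteq> 0 \<and> P g}"
  using carrier_S_finite by (rule finite_subset[rotated]) auto

lemma carrier_S_src_in_ideal_ginv: "f \<in> carrier S \<Longrightarrow> g \<in> G \<Longrightarrow> f (s g) \<in> A (ginv g)"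
  using carrier_S_in_ideal[OF _ src_closed] ideal_of_one_g_ginv by simp

lemma unit_delta_carrier: "\<gamma> \<in> G \<Longrightarrow> unit_delta \<gamma> \<in> carrier S"
  using ideal_of_self ideal_of_zero one_g_central_idempotent
  by (auto simp: carrier_S_iff unit_delta_def)

lemma S_abelian_group: "abelian_group S"
proof (rule abelian_groupI)
  fix x y assume x: "x \<in> carrier S" and y: "y \<in> carrier S"
  have "finite {g. x g + y g \<noteq> 0}"
    by (rule finite_subset[of _ "{g. x g \<noteq> 0} \<union> {g. y g \<noteq> 0}"])
      (use carrier_S_finite x y in auto)
  then show "x \<oplus>\<^bsub>S\<^esub> y \<in> carrier S"
    using x y ideal_of_add[OF one_g_central_idempotent]
    by (auto simp: add_S carrier_S_iff)
next
  fix x assume x: "x \<in> carrier S"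
  then have "(\<lambda>k. - x k) \<in> carrier S"
    using ideal_of_uminus[OF one_g_central_idempotent] by (auto simp: carrier_S_iff)
  moreover have "(\<lambda>k. - x k) \<oplus>\<^bsub>S\<^esub> x = \<zero>\<^bsub>S\<^esub>" by (simp add: add_S zero_S)
  ultimately show "\<exists>y\<in>carrier S. y \<oplus>\<^bsub>S\<^esub> x = \<zero>\<^bsub>S\<^esub>" by blast
qed (auto simp: add_S zero_S carrier_S_iff ideal_of_zero one_g_central_idempotent
       add.assoc add.commute)

lemma scalar_mult_carrier_S: "y \<in> carrier S \<Longrightarrow> (\<lambda>k. c * y k) \<in> carrier S"
  using carrier_S_finite[of y] ideal_of_mult_left[OF one_g_central_idempotent]
  by (auto simp: carrier_S_iff elim!: finite_subset[rotated])

lemma mult_S_apply_in_ideal: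
  assumes a: "a \<in> carrier S" and k: "k \<in> G"
  shows "(a \<otimes>\<^bsub>S\<^esub> b) k \<in> A k"
proof -
  have "alpha g (alpha (ginv g) (a g) * b (mul (ginv g) k)) \<in> A k"
    if g: "g \<in> G" "t g = t k" for g
  proof -
    have "alpha (ginv g) (a g) \<in> A (ginv g)"
      using alpha_closed[OF ginv_closed] carrier_S_in_ideal[OF a] ginv_ginv g by simp
    then have "alpha (ginv g) (a g) * b (mul (ginv g) k) \<in> A (ginv g)"
      by (rule ideal_of_mult_right[OF one_g_central_idempotent[OF ginv_closed[OF g(1)]]])
    then show ?thesis using alpha_closed ideal_of_one_g_tgt k g by metis
  qed
  then show ?thesis
    unfolding mult_S_apply using k by (auto intro!: ideal_of_sum one_g_central_idempotent)
qed

lemma mult_S_support: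
  "{k. (a \<otimes>\<^bsub>S\<^esub> b) k \<noteq> 0} \<subseteq> (\<lambda>(g, h). mul g h) ` ({g. a g \<noteq> 0} \<times> {h. b h \<noteq> 0})"
proof
  fix k assume "k \<in> {k. (a \<otimes>\<^bsub>S\<^esub> b) k \<noteq> 0}"
  then have k: "k \<in> G" and "(\<Sum>g\<in>{g\<in>G. a g \<noteq> 0 \<and> t g = t k}.
      alpha g (alpha (ginv g) (a g) * b (mul (ginv g) k))) \<noteq> 0"
    by (auto simp: mult_S_apply split: if_splits)
  then obtain g where g: "g \<in> G" "a g \<noteq> 0" "t g = t k"
    and "alpha g (alpha (ginv g) (a g) * b (mul (ginv g) k)) \<noteq> 0"
    by (auto elim: sum.not_neutral_contains_not_neutral)
  then have "b (mul (ginv g) k) \<noteq> 0" using alpha_zero by auto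
  moreover have "k = mul g (mul (ginv g) k)" using mul_ginv_mul_cancel g k by simp
  ultimately show "k \<in> (\<lambda>(g, h). mul g h) ` ({g. a g \<noteq> 0} \<times> {h. b h \<noteq> 0})"
    using g by (auto intro!: image_eqI[where x="(g, mul (ginv g) k)"])
qed

lemma mult_S_carrier:
  assumes a: "a \<in> carrier S" and b: "b \<in> carrier S"
  shows "a \<otimes>\<^bsub>S\<^esub> b \<in> carrier S"
proof -
  have "finite {k. (a \<otimes>\<^bsub>S\<^esub> b) k \<noteq> 0}"
    by (rule finite_subset[OF mult_S_support finite_imageI[OF
          finite_cartesian_product[OF carrier_S_finite[OF a] carrier_S_finite[OF b]]]])
  then show ?thesis
    using mult_S_apply_in_ideal[OF a] by (simp add: carrier_S_iff mult_S_apply)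
qed

lemma add_pow_nat_S:
  "y \<in> carrier S \<Longrightarrow> add_pow S (n::nat) y = (\<lambda>k. of_nat n * y k)"
  by (induction n) (simp_all add: add_pow_def nat_pow_def skew_groupoid_ring_def algebra_simps)

lemma add_pow_int_S:
  assumes y: "y \<in> carrier S"
  shows "add_pow S (n::int) y = (\<lambda>k. of_int n * y k)"
proof (cases "n \<ge> 0")
  case True
  then show ?thesis using add_pow_int_ge[of n S y] add_pow_nat_S[OF y, of "nat n"] by simp
next
  case False
  interpret abelian_group S by (rule S_abelian_group)
  let ?m = "nat (- n)"
  have "\<ominus>\<^bsub>S\<^esub> (\<lambda>k. of_nat ?m * y k) = (\<lambda>k. - (of_nat ?m * y k))"
    using scalar_mult_carrier_S[OF y, of "of_nat ?m"] scalar_mult_carrier_S[OF y, of "- of_nat ?m"]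
    by (intro minus_equality) (simp_all add: add_S zero_S)
  then have "add_pow S n y = (\<lambda>k. - (of_nat ?m * y k))"
    using add_pow_int_lt[of n S y] add_pow_nat_S[OF y, of ?m] False by simp
  also have "\<dots> = (\<lambda>k. of_int n * y k)" using False by simp
  finally show ?thesis .
qed

lemma finsum_S_apply:
  assumes "finite P" "f \<in> P \<rightarrow> carrier S"
  shows "finsum S f P k = (\<Sum>p\<in>P. f p k)"
  using assms
proof (induction P rule: finite_induct)
  interpret abelian_group S by (rule S_abelian_group)
  case empty
  show ?case by (simp add: zero_S)
next
  interpret abelian_group S by (rule S_abelian_group)
  case (insert p P)
  then show ?case by (simp add: finsum_insert add_S)
qed

lemma alpha_ginv_one_g_mult:
  assumes g: "\<gamma> \<in> G" and y: "y \<in> A (ginv \<gamma>)"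
  shows "alpha (ginv \<gamma>) (one_g \<gamma>) * y = y"
proof -
  have gi: "ginv \<gamma> \<in> G" using ginv_closed g .
  let ?z = "alpha \<gamma> y"
  have z: "?z \<in> A (ginv (ginv \<gamma>))" using alpha_closed g y ginv_ginv by simp
  have one: "one_g \<gamma> \<in> A (ginv (ginv \<gamma>))"
    using ideal_of_self[OF one_g_central_idempotent[OF g]] ginv_ginv g by simp
  have "alpha (ginv \<gamma>) (one_g \<gamma>) * y = alpha (ginv \<gamma>) (one_g \<gamma>) * alpha (ginv \<gamma>) ?z"
    using alpha_alpha_ginv[OF gi y] ginv_ginv g by simp
  also have "\<dots> = alpha (ginv \<gamma>) (one_g \<gamma> * ?z)" using alpha_mult[OF gi one z] by simp
  also have "one_g \<gamma> * ?z = ?z"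
    using ideal_of_idem_mult[OF one_g_central_idempotent[OF g]] alpha_closed g y by blast
  finally show ?thesis using alpha_alpha_ginv[OF gi y] ginv_ginv g by simp
qed

lemma unit_delta_mult_apply:
  assumes g: "\<gamma> \<in> G" and a: "a \<in> carrier S"
  shows "(unit_delta \<gamma> \<otimes>\<^bsub>S\<^esub> a) \<gamma> = alpha \<gamma> (a (s \<gamma>))"
proof -
  have "{g\<in>G. unit_delta \<gamma> g \<noteq> 0 \<and> t g = t \<gamma>} = {\<gamma>}"
    using g one_g_nonzero[OF g] by (auto simp: unit_delta_def)
  then have "(unit_delta \<gamma> \<otimes>\<^bsub>S\<^esub> a) \<gamma> = alpha \<gamma> (alpha (ginv \<gamma>) (one_g \<gamma>) * a (s \<gamma>))"
    using g mul_ginv_left by (simp add: mult_S_apply unit_delta_def)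
  also have "alpha (ginv \<gamma>) (one_g \<gamma>) * a (s \<gamma>) = a (s \<gamma>)"
    using alpha_ginv_one_g_mult[OF g] carrier_S_src_in_ideal_ginv[OF a g] by simp
  finally show ?thesis .
qed

lemma mult_unit_delta_apply_src:
  assumes g: "\<gamma> \<in> G" and b: "b \<in> carrier S"
  shows "(b \<otimes>\<^bsub>S\<^esub> unit_delta \<gamma>) (s \<gamma>) = b (ginv \<gamma>)"
proof -
  let ?X = "{g\<in>G. b g \<noteq> 0 \<and> t g = t (s \<gamma>)}"
  let ?f = "\<lambda>g. alpha g (alpha (ginv g) (b g) * unit_delta \<gamma> (mul (ginv g) (s \<gamma>)))"
  have ts: "t (s \<gamma>) = s \<gamma>" using tgt_of_obj src_obj g by blast
  have gi: "ginv \<gamma> \<in> G" using ginv_closed g .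
  have "(b \<otimes>\<^bsub>S\<^esub> unit_delta \<gamma>) (s \<gamma>) = sum ?f ?X"
    using src_closed g by (simp add: mult_S_apply)
  also have "\<dots> = (if ginv \<gamma> \<in> ?X then ?f (ginv \<gamma>) else 0)"
  proof (rule sum_eq_single)
    fix x assume x: "x \<in> ?X" "x \<noteq> ginv \<gamma>"
    then have "mul (ginv x) (s \<gamma>) = ginv x" using ginv_mul_tgt[of x] ts by simp
    moreover have "ginv x \<noteq> \<gamma>" using x ginv_ginv by force
    ultimately show "?f x = 0" using alpha_zero x by (simp add: unit_delta_def)
  qed (rule carrier_S_finite_restrict[OF b])
  also have "\<dots> = b (ginv \<gamma>)"
  proof (cases "b (ginv \<gamma>) = 0")
    case False
    have y: "b (ginv \<gamma>) \<in> A (ginv \<gamma>)" using carrier_S_in_ideal b gi by blast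
    have "?f (ginv \<gamma>) = alpha (ginv \<gamma>) (alpha \<gamma> (b (ginv \<gamma>)) * one_g \<gamma>)"
      using ginv_ginv g mul_src_right by (simp add: unit_delta_def)
    also have "alpha \<gamma> (b (ginv \<gamma>)) * one_g \<gamma> = alpha \<gamma> (b (ginv \<gamma>))"
      using alpha_closed[OF g y] ideal_of_iff one_g_central_idempotent g by blast
    also have "alpha (ginv \<gamma>) (alpha \<gamma> (b (ginv \<gamma>))) = b (ginv \<gamma>)"
      using alpha_alpha_ginv[OF gi y] ginv_ginv g by simp
    finally show ?thesis using False gi tgt_ginv g ts by simp
  qed simp
  finally show ?thesis .
qed

lemma mult_emb_apply:
  assumes g: "\<gamma> \<in> G" and a: "a \<in> carrier S"
  shows "(a \<otimes>\<^bsub>S\<^esub> emb r) \<gamma> = a \<gamma> * alpha \<gamma> (r * one_g (s \<gamma>))"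
proof -
  let ?X = "{g\<in>G. a g \<noteq> 0 \<and> t g = t \<gamma>}"
  let ?f = "\<lambda>g. alpha g (alpha (ginv g) (a g) * emb r (mul (ginv g) \<gamma>))"
  have gi: "ginv \<gamma> \<in> G" using ginv_closed g .
  have "(a \<otimes>\<^bsub>S\<^esub> emb r) \<gamma> = sum ?f ?X" using g by (simp add: mult_S_apply)
  also have "\<dots> = (if \<gamma> \<in> ?X then ?f \<gamma> else 0)"
  proof (rule sum_eq_single)
    fix x assume x: "x \<in> ?X" "x \<noteq> \<gamma>"
    then have "mul (ginv x) \<gamma> \<notin> G0" using eq_if_ginv_mul_obj[of x \<gamma>] g by auto
    then show "?f x = 0" using alpha_zero x by (simp add: skew_embed_def)
  qed (rule carrier_S_finite_restrict[OF a])
  also have "\<dots> = a \<gamma> * alpha \<gamma> (r * one_g (s \<gamma>))"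
  proof (cases "a \<gamma> = 0")
    case False
    have y1: "alpha (ginv \<gamma>) (a \<gamma>) \<in> A (ginv \<gamma>)"
      using alpha_closed[OF gi] carrier_S_in_ideal[OF a g] ginv_ginv g by simp
    have y2: "r * one_g (s \<gamma>) \<in> A (ginv \<gamma>)"
      using ideal_of_generator_mult ideal_of_one_g_ginv[OF g] by simp
    have "?f \<gamma> = alpha \<gamma> (alpha (ginv \<gamma>) (a \<gamma>) * (r * one_g (s \<gamma>)))"
      using mul_ginv_left src_obj g by (simp add: skew_embed_def)
    also have "\<dots> = a \<gamma> * alpha \<gamma> (r * one_g (s \<gamma>))"
      using alpha_mult[OF g y1 y2] alpha_alpha_ginv[OF g] carrier_S_in_ideal[OF a g] by simp
    finally show ?thesis using False g by simp
  qed simp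
  finally show ?thesis .
qed

lemma emb_mult_apply_obj:
  assumes e: "e \<in> G0" and b: "b \<in> carrier S"
  shows "(emb r \<otimes>\<^bsub>S\<^esub> b) e = r * one_g e * b e"
proof -
  have eG: "e \<in> G" using obj_closed e .
  have ci: "central_idempotent (one_g e)" using one_g_central_idempotent eG .
  let ?X = "{g\<in>G. emb r g \<noteq> 0 \<and> t g = t e}"
  let ?f = "\<lambda>g. alpha g (alpha (ginv g) (emb r g) * b (mul (ginv g) e))"
  have sub: "?X \<subseteq> {e}" using tgt_of_obj e by (auto simp: skew_embed_def)
  have "(emb r \<otimes>\<^bsub>S\<^esub> b) e = sum ?f ?X" using eG by (simp add: mult_S_apply)
  also have "\<dots> = (if e \<in> ?X then ?f e else 0)"
    by (rule sum_eq_single) (use sub finite_subset in auto)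
  also have "\<dots> = r * one_g e * b e"
  proof (cases "r * one_g e = 0")
    case False
    have y1: "r * one_g e \<in> A e" using ideal_of_generator_mult .
    have y2: "r * one_g e * b e \<in> A e" using ideal_of_mult_right[OF ci y1] .
    have "?f e = alpha e (alpha e (r * one_g e) * b e)"
      using ginv_obj[OF e] mul_obj_obj[OF e] e by (simp add: skew_embed_def)
    also have "\<dots> = r * one_g e * b e" using alpha_obj[OF e] y1 y2 by simp
    finally show ?thesis using False e eG tgt_of_obj by (simp add: skew_embed_def)
  qed (use e eG tgt_of_obj in \<open>auto simp: skew_embed_def\<close>)
  finally show ?thesis .
qed

lemma mult_S_apply_obj:
  assumes e: "e \<in> G0" and a: "a \<in> carrier S" and b: "b \<in> carrier S"
  shows "(a \<otimes>\<^bsub>S\<^esub> b) e = (\<Sum>g\<in>{g\<in>G. a g \<noteq> 0 \<and> t g = e}. a g * alpha g (b (ginv g)))"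
proof -
  have "(a \<otimes>\<^bsub>S\<^esub> b) e =
      (\<Sum>g\<in>{g\<in>G. a g \<noteq> 0 \<and> t g = e}. alpha g (alpha (ginv g) (a g) * b (mul (ginv g) e)))"
    using e obj_closed tgt_of_obj by (simp add: mult_S_apply)
  also have "\<dots> = (\<Sum>g\<in>{g\<in>G. a g \<noteq> 0 \<and> t g = e}. a g * alpha g (b (ginv g)))"
  proof (rule sum.cong[OF refl])
    fix g assume "g \<in> {g\<in>G. a g \<noteq> 0 \<and> t g = e}"
    then have g: "g \<in> G" and tg: "t g = e" by auto
    have y1: "alpha (ginv g) (a g) \<in> A (ginv g)"
      using alpha_closed[OF ginv_closed[OF g]] carrier_S_in_ideal[OF a g] ginv_ginv g by simp
    have y2: "b (ginv g) \<in> A (ginv g)" using carrier_S_in_ideal b ginv_closed g by blast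
    show "alpha g (alpha (ginv g) (a g) * b (mul (ginv g) e)) = a g * alpha g (b (ginv g))"
      using alpha_mult[OF g y1 y2] alpha_alpha_ginv[OF g] carrier_S_in_ideal[OF a g]
        ginv_mul_tgt[OF g] tg by simp
  qed
  finally show ?thesis .
qed


text \<open>For a formal sum \<open>x = \<Sum> n\<^sub>p (a\<^sub>p, b\<^sub>p)\<close>: \<open>mult_map_term x \<gamma>\<close> is the contribution of
  \<open>\<gamma>\<close> to the component of \<open>m(x)\<close> at \<open>t \<gamma>\<close>, and \<open>diagonal_term x e = \<Sum> n\<^sub>p a\<^sub>p(e) b\<^sub>p(e)\<close>.\<close>

definition mult_map_term :: "(('g \<Rightarrow> 'a) \<times> ('g \<Rightarrow> 'a) \<Rightarrow> int) \<Rightarrow> 'g \<Rightarrow> 'a" where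
  "mult_map_term x \<gamma> = tensor_eval (\<lambda>p. fst p \<gamma> * alpha \<gamma> (snd p (ginv \<gamma>))) x"

definition diagonal_term :: "(('g \<Rightarrow> 'a) \<times> ('g \<Rightarrow> 'a) \<Rightarrow> int) \<Rightarrow> 'g \<Rightarrow> 'a" where
  "diagonal_term x e = tensor_eval (\<lambda>p. fst p e * snd p e) x"

definition left_support :: "(('g \<Rightarrow> 'a) \<times> ('g \<Rightarrow> 'a) \<Rightarrow> int) \<Rightarrow> 'g set" where
  "left_support x = (\<Union>p\<in>fsupp x. {g\<in>G. fst p g \<noteq> 0})"

definition delta_functional :: "'g \<Rightarrow> ('g \<Rightarrow> 'a) \<times> ('g \<Rightarrow> 'a) \<Rightarrow> 'a" where
  "delta_functional \<gamma> p = fst p \<gamma> * alpha \<gamma> (snd p (s \<gamma>))"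

lemma formal_sums_finite: "x \<in> formal_sums S \<Longrightarrow> finite (fsupp x)"
  and formal_sums_fst: "x \<in> formal_sums S \<Longrightarrow> p \<in> fsupp x \<Longrightarrow> fst p \<in> carrier S"
  and formal_sums_snd: "x \<in> formal_sums S \<Longrightarrow> p \<in> fsupp x \<Longrightarrow> snd p \<in> carrier S"
  by (auto simp: formal_sums_def)

lemma finite_left_support:
  assumes x: "x \<in> formal_sums S"
  shows "finite (left_support x)"
  unfolding left_support_def
proof (rule finite_UN_I[OF formal_sums_finite[OF x]])
  fix p assume "p \<in> fsupp x"
  then show "finite {g\<in>G. fst p g \<noteq> 0}"
    using carrier_S_finite_restrict[OF formal_sums_fst[OF x], of p "\<lambda>_. True"] by simp
qed

lemma mult_map_term_outside_left_support:
  assumes x: "x \<in> formal_sums S" and \<gamma>: "\<gamma> \<notin> left_support x"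
  shows "mult_map_term x \<gamma> = 0"
proof -
  have "fst p \<gamma> = 0" if p: "p \<in> fsupp x" for p
  proof (cases "\<gamma> \<in> G")
    case True
    then show ?thesis using \<gamma> p unfolding left_support_def by blast
  qed (rule carrier_S_outside[OF formal_sums_fst[OF x p]])
  then show ?thesis unfolding mult_map_term_def tensor_eval_def by simp
qed

lemma diagonal_term_in_ideal:
  assumes x: "x \<in> formal_sums S" and e: "e \<in> G"
  shows "diagonal_term x e \<in> A e"
  unfolding diagonal_term_def tensor_eval_def
proof (rule ideal_of_sum[OF one_g_central_idempotent[OF e]])
  fix p assume p: "p \<in> fsupp x"
  note ci = one_g_central_idempotent[OF e]
  show "of_int (x p) * (fst p e * snd p e) \<in> A e"
    by (rule ideal_of_mult_left[OF ci ideal_of_mult_right[OF ci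
          carrier_S_in_ideal[OF formal_sums_fst[OF x p] e]]])
qed

lemma tensor_mult_map_apply_obj:
  assumes x: "x \<in> formal_sums S" and e: "e \<in> G0"
  shows "tensor_mult_map S x e = (\<Sum>\<gamma>\<in>{\<gamma>\<in>left_support x. t \<gamma> = e}. mult_map_term x \<gamma>)"
proof -
  let ?K = "{\<gamma>\<in>left_support x. t \<gamma> = e}"
  have prod: "fst p \<otimes>\<^bsub>S\<^esub> snd p \<in> carrier S" if "p \<in> fsupp x" for p
    by (rule mult_S_carrier[OF formal_sums_fst[OF x that] formal_sums_snd[OF x that]])
  have "(\<lambda>p. add_pow S (x p) (fst p \<otimes>\<^bsub>S\<^esub> snd p)) \<in> fsupp x \<rightarrow> carrier S"
    using add_pow_int_S[OF prod] scalar_mult_carrier_S[OF prod] by simp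
  then have "tensor_mult_map S x e = (\<Sum>p\<in>fsupp x. add_pow S (x p) (fst p \<otimes>\<^bsub>S\<^esub> snd p) e)"
    unfolding tensor_mult_map_def by (rule finsum_S_apply[OF formal_sums_finite[OF x]])
  also have "\<dots> = (\<Sum>p\<in>fsupp x. of_int (x p) * (\<Sum>\<gamma>\<in>?K. fst p \<gamma> * alpha \<gamma> (snd p (ginv \<gamma>))))"
  proof (rule sum.cong[OF refl])
    fix p assume p: "p \<in> fsupp x"
    have "(fst p \<otimes>\<^bsub>S\<^esub> snd p) e
        = (\<Sum>\<gamma>\<in>{\<gamma>\<in>G. fst p \<gamma> \<noteq> 0 \<and> t \<gamma> = e}. fst p \<gamma> * alpha \<gamma> (snd p (ginv \<gamma>)))"
      by (rule mult_S_apply_obj[OF e formal_sums_fst[OF x p] formal_sums_snd[OF x p]])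
    also have "\<dots> = (\<Sum>\<gamma>\<in>?K. fst p \<gamma> * alpha \<gamma> (snd p (ginv \<gamma>)))"
    proof (rule sum.mono_neutral_left)
      show "finite ?K" using finite_left_support[OF x] by simp
      show "{\<gamma>\<in>G. fst p \<gamma> \<noteq> 0 \<and> t \<gamma> = e} \<subseteq> ?K" using p unfolding left_support_def by blast
    qed (auto simp: left_support_def)
    finally show "add_pow S (x p) (fst p \<otimes>\<^bsub>S\<^esub> snd p) e
        = of_int (x p) * (\<Sum>\<gamma>\<in>?K. fst p \<gamma> * alpha \<gamma> (snd p (ginv \<gamma>)))"
      using add_pow_int_S[OF prod[OF p]] by simp
  qed
  also have "\<dots> = (\<Sum>\<gamma>\<in>?K. mult_map_term x \<gamma>)"
    unfolding mult_map_term_def tensor_eval_def sum_distrib_left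
    by (rule sum.swap)
  finally show ?thesis .
qed

lemma delta_functional_tensor_rel:
  assumes g: "\<gamma> \<in> G" and y: "y \<in> tensor_rel S (range emb)"
  shows "tensor_eval (delta_functional \<gamma>) y = 0"
proof (rule tensor_eval_tensor_rel[OF _ _ _ y])
  fix a a' b
  show "delta_functional \<gamma> (a \<oplus>\<^bsub>S\<^esub> a', b) = delta_functional \<gamma> (a, b) + delta_functional \<gamma> (a', b)"
    by (simp add: delta_functional_def add_S distrib_right)
next
  fix a b b' assume "b \<in> carrier S" "b' \<in> carrier S"
  then show "delta_functional \<gamma> (a, b \<oplus>\<^bsub>S\<^esub> b') = delta_functional \<gamma> (a, b) + delta_functional \<gamma> (a, b')"
    using alpha_add[OF g] carrier_S_src_in_ideal_ginv[OF _ g]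
    by (simp add: delta_functional_def add_S distrib_left)
next
  fix a r b assume a: "a \<in> carrier S" and "r \<in> range emb" and b: "b \<in> carrier S"
  then obtain r0 where r0: "r = emb r0" by blast
  have y1: "r0 * one_g (s \<gamma>) \<in> A (ginv \<gamma>)"
    using ideal_of_generator_mult ideal_of_one_g_ginv[OF g] by simp
  have "delta_functional \<gamma> (a \<otimes>\<^bsub>S\<^esub> r, b) = a \<gamma> * alpha \<gamma> (r0 * one_g (s \<gamma>)) * alpha \<gamma> (b (s \<gamma>))"
    unfolding delta_functional_def r0 using mult_emb_apply[OF g a] by simp
  also have "\<dots> = a \<gamma> * alpha \<gamma> (r0 * one_g (s \<gamma>) * b (s \<gamma>))"
    using alpha_mult[OF g y1 carrier_S_src_in_ideal_ginv[OF b g]] by (simp add: mult.assoc)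
  also have "\<dots> = delta_functional \<gamma> (a, r \<otimes>\<^bsub>S\<^esub> b)"
    unfolding delta_functional_def r0 using emb_mult_apply_obj[OF src_obj[OF g] b] by simp
  finally show "delta_functional \<gamma> (a \<otimes>\<^bsub>S\<^esub> r, b) = delta_functional \<gamma> (a, r \<otimes>\<^bsub>S\<^esub> b)" .
qed

lemma delta_functional_lmul_unit_delta:
  assumes x: "x \<in> formal_sums S" and g: "\<gamma> \<in> G"
  shows "finite (fsupp (tensor_lmul S (unit_delta \<gamma>) x))"
    and "tensor_eval (delta_functional \<gamma>) (tensor_lmul S (unit_delta \<gamma>) x)
      = alpha \<gamma> (diagonal_term x (s \<gamma>))"
proof -
  let ?\<phi> = "\<lambda>p. (unit_delta \<gamma> \<otimes>\<^bsub>S\<^esub> fst p, snd p)"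
  note image = tensor_eval_image[OF formal_sums_finite[OF x], where \<phi> = ?\<phi>, folded tensor_lmul_def]
  show "finite (fsupp (tensor_lmul S (unit_delta \<gamma>) x))" by (rule image(1))
  have fst_snd: "fst p (s \<gamma>) \<in> A (ginv \<gamma>)" "snd p (s \<gamma>) \<in> A (ginv \<gamma>)" if "p \<in> fsupp x" for p
    using carrier_S_src_in_ideal_ginv[OF _ g] formal_sums_fst formal_sums_snd x that by blast+
  note ci = one_g_central_idempotent[OF ginv_closed[OF g]]
  have summand_in: "of_int (x p) * (fst p (s \<gamma>) * snd p (s \<gamma>)) \<in> A (ginv \<gamma>)" if "p \<in> fsupp x" for p
    by (rule ideal_of_mult_left[OF ci ideal_of_mult_right[OF ci fst_snd(1)[OF that]]])
  have "tensor_eval (delta_functional \<gamma>) (tensor_lmul S (unit_delta \<gamma>) x)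
      = (\<Sum>p\<in>fsupp x. of_int (x p) * alpha \<gamma> (fst p (s \<gamma>) * snd p (s \<gamma>)))"
    unfolding image(2) delta_functional_def
    using unit_delta_mult_apply[OF g formal_sums_fst[OF x]] alpha_mult[OF g fst_snd] by simp
  also have "\<dots> = (\<Sum>p\<in>fsupp x. alpha \<gamma> (of_int (x p) * (fst p (s \<gamma>) * snd p (s \<gamma>))))"
    using alpha_of_int_mult[OF g ideal_of_mult_right[OF ci fst_snd(1)]] by simp
  also have "\<dots> = alpha \<gamma> (diagonal_term x (s \<gamma>))"
    unfolding diagonal_term_def tensor_eval_def by (rule alpha_sum[symmetric, OF g summand_in])
  finally show "tensor_eval (delta_functional \<gamma>) (tensor_lmul S (unit_delta \<gamma>) x)
      = alpha \<gamma> (diagonal_term x (s \<gamma>))" .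
qed

lemma delta_functional_rmul_unit_delta:
  assumes x: "x \<in> formal_sums S" and g: "\<gamma> \<in> G"
  shows "finite (fsupp (tensor_rmul S x (unit_delta \<gamma>)))"
    and "tensor_eval (delta_functional \<gamma>) (tensor_rmul S x (unit_delta \<gamma>)) = mult_map_term x \<gamma>"
proof -
  let ?\<phi> = "\<lambda>p. (fst p, snd p \<otimes>\<^bsub>S\<^esub> unit_delta \<gamma>)"
  note image = tensor_eval_image[OF formal_sums_finite[OF x], where \<phi> = ?\<phi>, folded tensor_rmul_def]
  show "finite (fsupp (tensor_rmul S x (unit_delta \<gamma>)))" by (rule image(1))
  show "tensor_eval (delta_functional \<gamma>) (tensor_rmul S x (unit_delta \<gamma>)) = mult_map_term x \<gamma>"
    unfolding image(2)
    by (simp add: delta_functional_def mult_map_term_def tensor_eval_def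
        mult_unit_delta_apply_src[OF g formal_sums_snd[OF x]])
qed

text \<open>Evaluating the balanced map \<open>delta_functional \<gamma>\<close> on both sides of
  \<open>1\<^sub>\<gamma>\<delta>\<^sub>\<gamma> x = x 1\<^sub>\<gamma>\<delta>\<^sub>\<gamma>\<close>.\<close>

lemma mult_map_term_eq_alpha_diagonal_term:
  assumes x: "x \<in> formal_sums S"
    and comm: "\<forall>c\<in>carrier S. tensor_lmul S c x - tensor_rmul S x c \<in> tensor_rel S (range emb)"
    and g: "\<gamma> \<in> G"
  shows "mult_map_term x \<gamma> = alpha \<gamma> (diagonal_term x (s \<gamma>))"
proof -
  have "tensor_eval (delta_functional \<gamma>)
      (tensor_lmul S (unit_delta \<gamma>) x - tensor_rmul S x (unit_delta \<gamma>)) = 0"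
    using delta_functional_tensor_rel[OF g] comm unit_delta_carrier[OF g] by blast
  then show ?thesis
    using delta_functional_lmul_unit_delta[OF x g] delta_functional_rmul_unit_delta[OF x g]
    by (simp add: tensor_eval_diff)
qed

lemma finite_src_fiber_if_separable:
  assumes sep: "separable_extension S (range emb)" and e0: "e0 \<in> G0"
  shows "\<exists>e\<in>G0. finite {\<gamma>\<in>G. s \<gamma> = e}"
proof -
  obtain x where x: "x \<in> formal_sums S" and m1: "tensor_mult_map S x = \<one>\<^bsub>S\<^esub>"
    and comm: "\<forall>c\<in>carrier S. tensor_lmul S c x - tensor_rmul S x c \<in> tensor_rel S (range emb)"
    using sep unfolding separable_extension_def by blast
  note M_eq = mult_map_term_eq_alpha_diagonal_term[OF x comm]
  have "(\<Sum>\<gamma>\<in>{\<gamma>\<in>left_support x. t \<gamma> = e0}. mult_map_term x \<gamma>) = one_g e0"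
    using tensor_mult_map_apply_obj[OF x e0] m1 e0 by (simp add: one_S)
  then have "(\<Sum>\<gamma>\<in>{\<gamma>\<in>left_support x. t \<gamma> = e0}. mult_map_term x \<gamma>) \<noteq> 0"
    using one_g_obj_nonzero e0 by simp
  then obtain g where "g \<in> {\<gamma>\<in>left_support x. t \<gamma> = e0}" and M_nonzero: "mult_map_term x g \<noteq> 0"
    by (rule sum.not_neutral_contains_not_neutral)
  then have gG: "g \<in> G" by (auto simp: left_support_def)
  have N_nonzero: "diagonal_term x (s g) \<noteq> 0" using M_nonzero M_eq[OF gG] alpha_zero[OF gG] by auto
  have "{\<gamma>\<in>G. s \<gamma> = s g} \<subseteq> left_support x"
  proof
    fix \<gamma> assume "\<gamma> \<in> {\<gamma>\<in>G. s \<gamma> = s g}"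
    then have \<gamma>: "\<gamma> \<in> G" and src: "s \<gamma> = s g" by auto
    have N_in: "diagonal_term x (s g) \<in> A (ginv \<gamma>)"
      using diagonal_term_in_ideal[OF x src_closed[OF gG]] ideal_of_one_g_ginv[OF \<gamma>] src by simp
    have zero_in: "0 \<in> A (ginv \<gamma>)"
      by (rule ideal_of_zero[OF one_g_central_idempotent[OF ginv_closed[OF \<gamma>]]])
    show "\<gamma> \<in> left_support x"
    proof (rule ccontr)
      assume "\<gamma> \<notin> left_support x"
      then have "alpha \<gamma> (diagonal_term x (s g)) = alpha \<gamma> 0"
        using mult_map_term_outside_left_support[OF x] M_eq[OF \<gamma>] alpha_zero[OF \<gamma>] src by simp
      then show False using alpha_inj[OF \<gamma> N_in zero_in] N_nonzero by blast
    qed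
  qed
  then show ?thesis using finite_left_support[OF x] src_obj[OF gG] finite_subset by blast
qed

end

theorem proposition4p1:
  fixes G G0 :: "'g set"
    and s t :: "'g \<Rightarrow> 'g"
    and mul :: "'g \<Rightarrow> 'g \<Rightarrow> 'g"
    and ginv :: "'g \<Rightarrow> 'g"
    and one_g :: "'g \<Rightarrow> 'a::ring_1"
    and alpha :: "'g \<Rightarrow> 'a \<Rightarrow> 'a"
  assumes "groupoid G G0 s t mul ginv"
    and "groupoid_connected G G0 s t"
    and "finite G0"
    and "\<forall>e\<in>G0. \<forall>f\<in>G0. e \<noteq> f \<longrightarrow> one_g e * one_g f = 0"
    and "(\<Sum>e\<in>G0. one_g e) = 1"
    and "\<forall>e\<in>G0. ideal_of (one_g e) \<noteq> {0}"
    and "global_action G G0 s t mul ginv one_g alpha"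
    and "separable_extension (skew_groupoid_ring G G0 s t mul ginv one_g alpha)
           (range (skew_embed G0 one_g))"
  shows "finite G"
proof -
  have "\<forall>e\<in>G0. one_g e \<noteq> 0"
    using assms(6) by (auto simp: ideal_of_def)
  then interpret global_groupoid_action G G0 s t mul ginv one_g alpha
    using assms(1,7) by unfold_locales
  show ?thesis
  proof (cases "G0 = {}")
    case True
    then have "G = {}" using src_obj by blast
    then show ?thesis by simp
  next
    case False
    then obtain e where "e \<in> G0" "finite {\<gamma>\<in>G. s \<gamma> = e}"
      using finite_src_fiber_if_separable[OF assms(8)] by blast
    then show ?thesis using finite_if_finite_src_fiber assms(2,3) by blast
  qed
qed

end
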